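(* Let $\mathbb{K}$ be a field, $n>1$, and let $a=[a_1,\dots,a_n]\in\mathbb{K}[s]^n$ be a non-zero row vector of degree $d=\max_i\deg(a_i)$. Let $h_1,\dots,h_l$ be a basis of the $\mathbb{K}$-vector space $\mathrm{syz}_d(a)$. Then $\mathrm{syz}(a)=\langle h_1,\dots,h_l\rangle_{\mathbb{K}[s]}$.
   Context: $\mathrm{syz}(a)=\{h\in\mathbb{K}[s]^n \mid a\,h=a_1h_1+\dots+a_nh_n=0\}$ (elements $h$ are column vectors), a $\mathbb{K}[s]$-module. The degree of a polynomial vector is the maximum of the degrees of its entries. $\mathrm{syz}_d(a)=\{h\in\mathbb{K}[s]^n \mid \deg(h)\le d,\ a\,h=0\}$, a finite-dimensional $\mathbb{K}$-vector space. $\langle\cdot\rangle_{\mathbb{K}[s]}$ denotes the $\mathbb{K}[s]$-module generated. *)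

theory Defs
  imports "HOL-Computational_Algebra.Polynomial" "HOL-Library.Cardinality" "HOL-Library.Function_Algebras"
begin

text \<open>Polynomial vectors of length n are modelled as functions from a finite index
type 'n (with CARD('n) = n) into K[s].\<close>

definition pvec_degree :: "('n::finite \<Rightarrow> 'k::field poly) \<Rightarrow> nat" where
  "pvec_degree h = Max (range (\<lambda>i. degree (h i)))"

definition syz :: "('n::finite \<Rightarrow> 'k::field poly) \<Rightarrow> ('n \<Rightarrow> 'k poly) set" where
  "syz a = {h. (\<Sum>i\<in>UNIV. a i * h i) = 0}"

definition syz_d :: "('n::finite \<Rightarrow> 'k::field poly) \<Rightarrow> nat \<Rightarrow> ('n \<Rightarrow> 'k poly) set" where
  "syz_d a d = {h. pvec_degree h \<le> d \<and> (\<Sum>i\<in>UNIV. a i * h i) = 0}"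

definition kscale :: "'k::field \<Rightarrow> ('n \<Rightarrow> 'k poly) \<Rightarrow> ('n \<Rightarrow> 'k poly)" where
  "kscale c v = (\<lambda>i. smult c (v i))"

definition pscale :: "'k::field poly \<Rightarrow> ('n \<Rightarrow> 'k poly) \<Rightarrow> ('n \<Rightarrow> 'k poly)" where
  "pscale p v = (\<lambda>i. p * v i)"

end

theory Submission
  imports Defs
begin

text \<open>Write \<open>a = g b\<close> with \<open>g \<noteq> 0\<close> a common divisor of the \<open>a\<^sub>i\<close> of least degree among the
nonzero \<open>K[s]\<close>-combinations of them; then \<open>\<Sum> u\<^sub>i b\<^sub>i = 1\<close> for some \<open>u\<close>, and \<open>syz a = syz b\<close>.
For a unimodular \<open>b\<close> every syzygy \<open>x\<close> is a \<open>K[s]\<close>-combination of the Koszul syzygies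
\<open>b\<^sub>i e\<^sub>j - b\<^sub>j e\<^sub>i\<close>, namely \<open>x = \<Sum>\<^sub>i\<^sub>,\<^sub>j u\<^sub>i x\<^sub>j (b\<^sub>i e\<^sub>j - b\<^sub>j e\<^sub>i)\<close>. These have degree at most
\<open>deg b \<le> deg a = d\<close>, so they lie in \<open>syz\<^sub>d(a)\<close>, which is spanned over \<open>K\<close>, hence over \<open>K[s]\<close>, by
the \<open>h\<^sub>k\<close>.\<close>

lemma module_kscale: "module (kscale :: 'k::field \<Rightarrow> ('n \<Rightarrow> 'k poly) \<Rightarrow> _)"
  by unfold_locales (auto simp: kscale_def fun_eq_iff smult_add_right smult_add_left)

lemma module_pscale: "module (pscale :: 'k::field poly \<Rightarrow> ('n \<Rightarrow> 'k poly) \<Rightarrow> _)"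
  by unfold_locales (auto simp: pscale_def fun_eq_iff algebra_simps)

lemma kscale_eq_pscale_const: "kscale c v = pscale [:c:] v"
  by (simp add: kscale_def pscale_def fun_eq_iff)

lemma span_kscale_subset_span_pscale:
  "module.span kscale S \<subseteq> module.span pscale (S :: ('n \<Rightarrow> 'k::field poly) set)"
proof -
  interpret K: module "kscale :: 'k \<Rightarrow> ('n \<Rightarrow> 'k poly) \<Rightarrow> _" by (rule module_kscale)
  interpret P: module "pscale :: 'k poly \<Rightarrow> ('n \<Rightarrow> 'k poly) \<Rightarrow> _" by (rule module_pscale)
  have "K.subspace (P.span S)"
    unfolding K.subspace_def kscale_eq_pscale_const
    by (simp add: P.span_zero P.span_add P.span_scale)
  then show ?thesis by (rule K.span_minimal[OF P.span_superset])
qed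

lemma pvec_degree_le_iff:
  fixes v :: "'n::finite \<Rightarrow> 'k::field poly"
  shows "pvec_degree v \<le> d \<longleftrightarrow> (\<forall>i. degree (v i) \<le> d)"
  unfolding pvec_degree_def by (subst Max_le_iff) auto

lemma sum_fun_apply: "(sum f A) x = (\<Sum>a\<in>A. f a x)"
  by (induction A rule: infinite_finite_induct) auto

lemma sum_if_zero_const: "(\<Sum>j\<in>A. if P then f j else 0) = (if P then sum f A else 0)"
  by simp

lemma mult_if_zero:
  "(x::'a::semiring_0) * (if P then y else 0) = (if P then x * y else 0)"
  "(if P then y else 0) * x = (if P then y * x else 0)"
  by auto

lemma subspace_syz: "module.subspace pscale (syz (a :: 'n::finite \<Rightarrow> 'k::field poly))"
proof -
  interpret P: module "pscale :: 'k poly \<Rightarrow> ('n \<Rightarrow> 'k poly) \<Rightarrow> _" by (rule module_pscale)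
  show ?thesis
    unfolding P.subspace_def syz_def pscale_def
    by (auto simp: distrib_left sum.distrib sum_distrib_left mult.left_commute
        simp flip: sum_distrib_left)
qed

lemma syz_d_subset_syz: "syz_d a d \<subseteq> syz a"
  by (auto simp: syz_d_def syz_def)

lemma syzygy_equation_mult_cancel:
  fixes b :: "'n::finite \<Rightarrow> 'k::field poly"
  assumes "g \<noteq> 0"
  shows "(\<Sum>i\<in>UNIV. g * b i * x i) = 0 \<longleftrightarrow> (\<Sum>i\<in>UNIV. b i * x i) = 0"
proof -
  have "(\<Sum>i\<in>UNIV. g * b i * x i) = g * (\<Sum>i\<in>UNIV. b i * x i)"
    by (simp add: sum_distrib_left mult.assoc)
  then show ?thesis using assms by simp
qed

lemma exists_combination_dvd:
  fixes a :: "'n::finite \<Rightarrow> 'k::field poly"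
  assumes "a \<noteq> 0"
  obtains u where "(\<Sum>i\<in>UNIV. u i * a i) \<noteq> 0" "\<And>i. (\<Sum>j\<in>UNIV. u j * a j) dvd a i"
proof -
  define P where "P m \<longleftrightarrow> (\<exists>u. (\<Sum>i\<in>UNIV. u i * a i) \<noteq> 0 \<and> degree (\<Sum>i\<in>UNIV. u i * a i) = m)"
    for m
  obtain i0 where i0: "a i0 \<noteq> 0" using assms by (auto simp: fun_eq_iff)
  have "P (degree (a i0))"
    unfolding P_def by (rule exI[of _ "\<lambda>j. if j = i0 then 1 else 0"]) (simp add: i0 mult_if_zero)
  then have "P (LEAST m. P m)" by (rule LeastI)
  then obtain u where u: "(\<Sum>i\<in>UNIV. u i * a i) \<noteq> 0"
    and u_least: "degree (\<Sum>i\<in>UNIV. u i * a i) = (LEAST m. P m)"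
    unfolding P_def by blast
  define g where "g = (\<Sum>i\<in>UNIV. u i * a i)"
  have "g dvd a i" for i
  proof (rule ccontr)
    assume "\<not> g dvd a i"
    then have r: "a i mod g \<noteq> 0" by (simp add: dvd_eq_mod_eq_0)
    define v where "v j = (if j = i then 1 else 0) - (a i div g) * u j" for j
    have "(\<Sum>j\<in>UNIV. v j * a j) = a i - (a i div g) * g"
      by (simp add: v_def left_diff_distrib sum_subtractf g_def sum_distrib_left sum_distrib_right
          mult_if_zero algebra_simps)
    also have "\<dots> = a i mod g" by (simp add: minus_div_mult_eq_mod)
    finally have "P (degree (a i mod g))" unfolding P_def using r by metis
    then have "degree g \<le> degree (a i mod g)"
      unfolding g_def u_least by (rule Least_le)
    moreover have "degree (a i mod g) < degree g"
      using degree_mod_less[of g "a i"] r u g_def by auto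
    ultimately show False by simp
  qed
  with u show thesis using that g_def by blast
qed

lemma exists_unimodular_cofactor:
  fixes a :: "'n::finite \<Rightarrow> 'k::field poly"
  assumes "a \<noteq> 0"
  obtains g b u where "g \<noteq> 0" "\<And>i. a i = g * b i" "(\<Sum>i\<in>UNIV. u i * b i) = 1"
proof -
  obtain u where "(\<Sum>i\<in>UNIV. u i * a i) \<noteq> 0" and "\<And>i. (\<Sum>j\<in>UNIV. u j * a j) dvd a i"
    using exists_combination_dvd[OF assms] by blast
  then obtain g where g: "g \<noteq> 0" "g = (\<Sum>i\<in>UNIV. u i * a i)" and dvd: "\<And>i. g dvd a i"
    by blast
  define b where "b i = a i div g" for i
  have ab: "a i = g * b i" for i using dvd[of i] by (simp add: b_def)
  have "g * (\<Sum>i\<in>UNIV. u i * b i) = g * 1"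
    by (subst (2) g(2)) (simp add: ab sum_distrib_left algebra_simps)
  with g(1) have "(\<Sum>i\<in>UNIV. u i * b i) = 1" by simp
  with g(1) ab show thesis by (rule that)
qed

definition koszul_syz :: "('n \<Rightarrow> 'k::field poly) \<Rightarrow> 'n \<Rightarrow> 'n \<Rightarrow> ('n \<Rightarrow> 'k poly)" where
  "koszul_syz b i j = (\<lambda>k. (if k = j then b i else 0) - (if k = i then b j else 0))"

lemma koszul_syz_in_syz_d:
  fixes b :: "'n::finite \<Rightarrow> 'k::field poly"
  assumes "\<And>i. degree (b i) \<le> d"
  shows "koszul_syz b i j \<in> syz_d b d"
proof -
  have "pvec_degree (koszul_syz b i j) \<le> d"
    unfolding pvec_degree_le_iff koszul_syz_def using assms by (auto intro: degree_diff_le)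
  moreover have "(\<Sum>k\<in>UNIV. b k * koszul_syz b i j k) = 0"
    by (simp add: koszul_syz_def right_diff_distrib sum_subtractf mult_if_zero)
  ultimately show ?thesis by (simp add: syz_d_def)
qed

lemma syz_eq_koszul_combination:
  fixes b :: "'n::finite \<Rightarrow> 'k::field poly"
  assumes unimodular: "(\<Sum>i\<in>UNIV. u i * b i) = 1" and x: "x \<in> syz b"
  shows "x = (\<Sum>i\<in>UNIV. \<Sum>j\<in>UNIV. pscale (u i * x j) (koszul_syz b i j))"
proof
  fix k
  have bx: "(\<Sum>j\<in>UNIV. b j * x j) = 0" using x by (simp add: syz_def)
  have "(\<Sum>i\<in>UNIV. \<Sum>j\<in>UNIV. pscale (u i * x j) (koszul_syz b i j)) k
      = (\<Sum>i\<in>UNIV. \<Sum>j\<in>UNIV. u i * x j * koszul_syz b i j k)"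
    by (simp add: pscale_def sum_fun_apply)
  also have "\<dots> = (\<Sum>i\<in>UNIV. u i * b i) * x k - u k * (\<Sum>j\<in>UNIV. b j * x j)"
    by (simp add: koszul_syz_def right_diff_distrib sum_subtractf mult_if_zero sum_distrib_left
        sum_distrib_right algebra_simps sum_if_zero_const)
  also have "\<dots> = x k" by (simp add: unimodular bx)
  finally show "x k = (\<Sum>i\<in>UNIV. \<Sum>j\<in>UNIV. pscale (u i * x j) (koszul_syz b i j)) k" by simp
qed

lemma syz_subset_span_syz_d:
  fixes a :: "'n::finite \<Rightarrow> 'k::field poly"
  assumes "a \<noteq> 0"
  shows "syz a \<subseteq> module.span pscale (syz_d a (pvec_degree a))"
proof
  interpret P: module "pscale :: 'k poly \<Rightarrow> ('n \<Rightarrow> 'k poly) \<Rightarrow> _" by (rule module_pscale)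
  fix x assume x: "x \<in> syz a"
  obtain g b u where g: "g \<noteq> 0" and ab: "\<And>i. a i = g * b i"
    and unimodular: "(\<Sum>i\<in>UNIV. u i * b i) = 1"
    using exists_unimodular_cofactor[OF assms] by blast
  have a_eq: "a = (\<lambda>i. g * b i)" using ab by auto
  have "degree (b i) \<le> pvec_degree a" for i
  proof -
    have "degree (b i) \<le> degree (a i)"
      using g by (cases "b i = 0") (simp_all add: ab degree_mult_eq)
    also have "\<dots> \<le> pvec_degree a" using pvec_degree_le_iff[of a "pvec_degree a"] by simp
    finally show ?thesis .
  qed
  then have "koszul_syz b i j \<in> syz_d b (pvec_degree a)" for i j
    by (rule koszul_syz_in_syz_d)
  then have koszul_in: "koszul_syz b i j \<in> syz_d a (pvec_degree a)" for i j
    by (simp add: syz_d_def a_eq syzygy_equation_mult_cancel[OF g])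
  have x_eq: "x = (\<Sum>i\<in>UNIV. \<Sum>j\<in>UNIV. pscale (u i * x j) (koszul_syz b i j))"
    using syz_eq_koszul_combination[OF unimodular] x
    by (simp add: a_eq syz_def syzygy_equation_mult_cancel[OF g])
  show "x \<in> P.span (syz_d a (pvec_degree a))"
    by (subst x_eq) (intro P.span_sum P.span_scale P.span_base koszul_in)
qed

theorem lemma2:
  fixes a :: "'n::finite \<Rightarrow> 'k::field poly"
    and h :: "nat \<Rightarrow> ('n \<Rightarrow> 'k poly)"
    and l d :: nat
  assumes "CARD('n) > 1"
    and "a \<noteq> 0"
    and "d = pvec_degree a"
    and "inj_on h {..<l}"
    and "h ` {..<l} \<subseteq> syz_d a d"
    and "\<not> module.dependent kscale (h ` {..<l})"
    and "module.span kscale (h ` {..<l}) = syz_d a d"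
  shows "syz a = module.span pscale (h ` {..<l})"
proof -
  interpret P: module "pscale :: 'k poly \<Rightarrow> ('n \<Rightarrow> 'k poly) \<Rightarrow> _" by (rule module_pscale)
  have syz_d_in_span: "syz_d a d \<subseteq> P.span (h ` {..<l})"
    using span_kscale_subset_span_pscale assms(7) by metis
  have "syz a \<subseteq> P.span (h ` {..<l})"
    using syz_subset_span_syz_d[OF assms(2)] P.span_minimal[OF syz_d_in_span P.subspace_span]
    by (simp add: assms(3))
  moreover have "P.span (h ` {..<l}) \<subseteq> syz a"
    using assms(5) syz_d_subset_syz by (intro P.span_minimal[OF _ subspace_syz]) blast
  ultimately show ?thesis by blast
qed

end
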